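(* Let $s=1$, $d=2$ with basis $|+\rangle,|-\rangle$ and shift vectors $v_+=+1$, $v_-=-1$. For $r\in\mathbb R$ let $U_r=\begin{pmatrix}\cos r&\sin r\\\sin r&-\cos r\end{pmatrix}$. Fix $r_0\in\mathbb R$ and $\sigma>0$, and let $\nu$ be the law of $U_r$ when $r$ is distributed on $[r_0-\pi,r_0+\pi]$ with density $\frac1Ne^{-(r-r_0)^2/\sigma^2}$ ($N$ the normalizing constant). Then for the associated walk $\mathbf W$, $\mathbf W^2$ is strictly contractive on $\{\mathbb 1\}^\perp\subset\mathcal T$.
   Context: General setting: for a lattice dimension $s$, internal dimension $d$, shift vectors $v_1,\dots,v_d\in\mathbb Z^s$ and a Borel probability measure $\nu$ on $\mathcal U(d)$, put $\widetilde U=\int U\,\nu(dU)$, $T(B)=\int U^*BU\,\nu(dU)$. $\mathcal T$ denotes the Hilbert space of (a.e.-classes of) measurable functions $A:[0,2\pi)^s\to M_d(\mathbb C)$ with inner product $\langle A,B\rangle=(2\pi)^{-s}\int d^sp\,\frac1d\mathrm{tr}(A(p)^*B(p))$, norm $\|A\|=\langle A,A\rangle^{1/2}$ (momentum representation of translation-invariant operators on $\ell^2(\mathbb Z^s)\otimes\mathbb C^d$). $\mathbb 1$ is the constant identity function; $A_0=(2\pi)^{-s}\int A(p)d^sp$; $S(p)=\mathrm{diag}(e^{iv_1\cdot p},\dots,e^{iv_d\cdot p})$. The walk with shift $|x\otimes i\rangle\mapsto|x+v_i\otimes i\rangle$ and coins i.i.d. in space and time with law $\nu$ acts on $\mathcal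 T$ by $\mathbf W(A)(p)=S(p)^*\big[T(A_0)+\widetilde U^*(A(p)-A_0)\widetilde U\big]S(p)$. A bounded map $\mathbf V$ on $\mathcal T$ is strictly contractive on $\{\mathbb 1\}^\perp$ if there is $c<1$ with $\|\mathbf V(A)\|\le c\|A\|$ for all $A\in\mathcal T$ with $\langle\mathbb 1,A\rangle=0$. *)

theory Defs
  imports "HOL-Analysis.Analysis"
begin

text \<open>Matrices in M_d(C) are represented as complex^'d^'d (row index first).
  Momenta p range over the torus [0,2pi)^s, represented in real^'s.\<close>

definition adj :: "complex^'d^'d \<Rightarrow> complex^'d^'d" where
  "adj B = (\<chi> i j. cnj (B $ j $ i))"

definition mtrace :: "complex^'d^'d \<Rightarrow> complex" where
  "mtrace B = (\<Sum>i\<in>UNIV. B $ i $ i)"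

definition torus :: "(real^'s) set" where
  "torus = {p. \<forall>k. 0 \<le> p $ k \<and> p $ k < 2 * pi}"

definition Tspace :: "(real^'s \<Rightarrow> complex^'d^'d) set" where
  "Tspace = {A. set_borel_measurable lborel (torus :: (real^'s) set) A \<and>
                set_integrable lborel (torus :: (real^'s) set) (\<lambda>p. (norm (A p))\<^sup>2)}"

definition tinner :: "(real^'s \<Rightarrow> complex^'d^'d) \<Rightarrow> (real^'s \<Rightarrow> complex^'d^'d) \<Rightarrow> complex" where
  "tinner A B = (1 / (2 * pi) ^ CARD('s)) *
     (LINT p : (torus :: (real^'s) set) | lborel. (1 / of_nat CARD('d)) * mtrace (adj (A p) ** B p))"

definition tnorm :: "(real^'s \<Rightarrow> complex^'d^'d) \<Rightarrow> real" where
  "tnorm A = sqrt (Re (tinner A A))"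

definition one_T :: "real^'s \<Rightarrow> complex^'d^'d" where
  "one_T = (\<lambda>p. mat 1)"

definition A0 :: "(real^'s \<Rightarrow> complex^'d^'d) \<Rightarrow> complex^'d^'d" where
  "A0 A = (1 / (2 * pi) ^ CARD('s)) *\<^sub>R (LINT p : (torus :: (real^'s) set) | lborel. A p)"

definition Sop :: "('d \<Rightarrow> int^'s) \<Rightarrow> real^'s \<Rightarrow> complex^'d^'d" where
  "Sop v p = (\<chi> i j. if i = j then exp (\<i> * complex_of_real (\<Sum>k\<in>UNIV. of_int (v i $ k) * p $ k)) else 0)"

text \<open>Averaged coin and the channel T, for a Borel probability measure nu on matrices (supported on U(d)).\<close>
definition Utilde :: "(complex^'d^'d) measure \<Rightarrow> complex^'d^'d" where
  "Utilde nu = (\<integral>U. U \<partial>nu)"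

definition Tch :: "(complex^'d^'d) measure \<Rightarrow> complex^'d^'d \<Rightarrow> complex^'d^'d" where
  "Tch nu B = (\<integral>U. adj U ** B ** U \<partial>nu)"

definition walkW :: "(complex^'d^'d) measure \<Rightarrow> ('d \<Rightarrow> int^'s)
     \<Rightarrow> (real^'s \<Rightarrow> complex^'d^'d) \<Rightarrow> (real^'s \<Rightarrow> complex^'d^'d)" where
  "walkW nu v A = (\<lambda>p. adj (Sop v p) **
       (Tch nu (A0 A) + adj (Utilde nu) ** (A p - A0 A) ** Utilde nu) ** Sop v p)"

definition strictly_contractive_perp ::
  "((real^'s \<Rightarrow> complex^'d^'d) \<Rightarrow> (real^'s \<Rightarrow> complex^'d^'d)) \<Rightarrow> bool" where
  "strictly_contractive_perp V \<longleftrightarrow>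
     (\<exists>c < 1. \<forall>A \<in> Tspace. tinner one_T A = 0 \<longrightarrow> tnorm (V A) \<le> c * tnorm A)"

datatype pm = Pl | Mi

lemma UNIV_pm: "UNIV = {Pl, Mi}"
  using pm.exhaust by auto

instance pm :: finite
  by standard (simp add: UNIV_pm)

definition vpm :: "pm \<Rightarrow> int^1" where
  "vpm i = (\<chi> k. if i = Pl then 1 else -1)"

definition Ur :: "real \<Rightarrow> complex^pm^pm" where
  "Ur r = (\<chi> i j. if i = Pl \<and> j = Pl then complex_of_real (cos r)
                 else if i = Mi \<and> j = Mi then complex_of_real (- cos r)
                 else complex_of_real (sin r))"

definition gauss_N :: "real \<Rightarrow> real \<Rightarrow> real" where
  "gauss_N r0 \<sigma> = (LBINT r = r0 - pi..r0 + pi. exp (- (r - r0)\<^sup>2 / \<sigma>\<^sup>2))"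

definition gauss_density :: "real \<Rightarrow> real \<Rightarrow> real \<Rightarrow> real" where
  "gauss_density r0 \<sigma> r =
     indicator {r0 - pi..r0 + pi} r * exp (- (r - r0)\<^sup>2 / \<sigma>\<^sup>2) / gauss_N r0 \<sigma>"

definition nu_gauss :: "real \<Rightarrow> real \<Rightarrow> (complex^pm^pm) measure" where
  "nu_gauss r0 \<sigma> =
     distr (density lborel (\<lambda>r. ennreal (gauss_density r0 \<sigma> r))) borel Ur"

end

theory Submission
  imports Defs
begin

(* Split a square-integrable A into its mean A0 and the mean-zero
   fluctuation D = A - A0; one step of the walk gives
     W A (p) = S(p)* [ T(A0) + Utilde* D(p) Utilde ] S(p).
   For the Gaussian coin Utilde Utilde* = rho 1 with rho = |E e^{ir}|^2 < 1, so by
   Pythagoras the fluctuation loses the factor rho^2 in energy, while the mean is only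
   mapped by the contraction T.  A second step contracts the mean as well: for shifts
   +1, -1 the momentum average removes the fluctuating part from the diagonal of the
   mean of W A, which is thus the diagonal of T(A0), and on traceless matrices this
   diagonal is damped by mu = |E e^{2ir}|^2 < 1. *)


section \<open>Matrices: adjoint, trace and Frobenius norm\<close>

lemma adj_mult: "adj ((A::complex^'d^'d) ** B) = adj B ** adj A"
  by (simp add: vec_eq_iff adj_def matrix_matrix_mult_def mult.commute)

lemma adj_adj [simp]: "adj (adj A) = A"
  by (simp add: vec_eq_iff adj_def)

lemma adj_mat1 [simp]: "adj (mat 1) = mat 1"
  by (simp add: vec_eq_iff adj_def mat_def)

lemma mtrace_eq_trace: "mtrace = trace"
  by (simp add: fun_eq_iff mtrace_def trace_def)

lemma mtrace_comm: "mtrace ((A::complex^'d^'d) ** B) = mtrace (B ** A)"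
  using trace_mul_sym[of A B] by (simp add: mtrace_eq_trace)

lemma mtrace_scaleR: "mtrace (k *\<^sub>R A) = k *\<^sub>R mtrace (A::complex^'d^'d)"
  by (simp add: mtrace_def scaleR_sum_right)

lemma scaleR_mat1_nth: "(k *\<^sub>R mat 1 :: complex^'d^'d) $ i $ j = (if i = j then of_real k else 0)"
  by (simp add: mat_def of_real_def)

lemma norm_sq_entries:
  "(norm (X::complex^'d^'d))^2 = (\<Sum>i\<in>UNIV. \<Sum>j\<in>UNIV. (cmod (X$i$j))^2)"
  by (simp add: norm_vec_def L2_set_def sum_nonneg)

lemma mtrace_adj_self: "mtrace (adj X ** (X::complex^'d^'d)) = of_real ((norm X)^2)"
proof -
  have "mtrace (adj X ** X) = (\<Sum>i\<in>UNIV. \<Sum>k\<in>UNIV. of_real ((cmod (X$k$i))^2))"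
    using complex_norm_square[symmetric]
    by (simp add: mtrace_def adj_def matrix_matrix_mult_def mult.commute)
  also have "\<dots> = of_real (\<Sum>i\<in>UNIV. \<Sum>j\<in>UNIV. (cmod (X$j$i))^2)" by simp
  also have "(\<Sum>i\<in>UNIV. \<Sum>j\<in>UNIV. (cmod (X$j$i))^2) = (\<Sum>i\<in>UNIV. \<Sum>j\<in>UNIV. (cmod (X$i$j))^2)"
    by (rule sum.swap)
  finally show ?thesis by (simp add: norm_sq_entries)
qed

text \<open>Conjugation by a multiple of a unitary scales the Frobenius norm; this is how
  the averaged coin damps the fluctuation and how the shift preserves the energy.\<close>
lemma norm_conj_scaled:
  assumes "U ** adj U = k *\<^sub>R mat 1"
  shows "(norm (adj U ** X ** (U::complex^'d^'d)))^2 = k^2 * (norm X)^2"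
proof -
  let ?Y = "adj U ** X ** U"
  have "adj ?Y ** ?Y = adj U ** adj X ** (U ** adj U) ** X ** U"
    by (simp add: adj_mult matrix_mul_assoc)
  also have "\<dots> = k *\<^sub>R (adj U ** (adj X ** X ** U))"
    by (simp add: assms matrix_scalar_ac scalar_matrix_assoc matrix_mul_assoc)
  finally have "mtrace (adj ?Y ** ?Y) = k *\<^sub>R mtrace (adj X ** X ** U ** adj U)"
    using mtrace_comm[of "adj U" "adj X ** X ** U"] by (simp add: mtrace_scaleR matrix_mul_assoc)
  also have "\<dots> = k *\<^sub>R k *\<^sub>R mtrace (adj X ** X)"
    by (simp add: assms matrix_mul_assoc[symmetric] matrix_scalar_ac mtrace_scaleR flip: scalar_matrix_assoc)
  finally have "of_real ((norm ?Y)^2) = (of_real (k^2 * (norm X)^2) :: complex)"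
    by (simp add: mtrace_adj_self power2_eq_square scaleR_conv_of_real)
  then show ?thesis using of_real_eq_iff by blast
qed

lemma norm_conj_unitary:
  assumes "U ** adj U = mat 1"
  shows "norm (adj U ** X ** (U::complex^'d^'d)) = norm X"
  using norm_conj_scaled[of U 1 X] assms by (simp add: power2_eq_iff_nonneg)

lemma continuous_matrix_mult: "continuous_on UNIV (\<lambda>x. fst x ** (snd x :: complex^'d^'d))"
  unfolding matrix_matrix_mult_def by (intro continuous_intros)

lemma borel_measurable_matrix_mult [measurable]:
  "f \<in> borel_measurable M \<Longrightarrow> g \<in> borel_measurable M \<Longrightarrow>
     (\<lambda>x. f x ** (g x :: complex^'d^'d)) \<in> borel_measurable M"
  by (rule borel_measurable_continuous_Pair[OF _ _ continuous_matrix_mult])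

lemma borel_measurable_adj [measurable]:
  "f \<in> borel_measurable M \<Longrightarrow> (\<lambda>x. adj (f x :: complex^'d^'d)) \<in> borel_measurable M"
  by (rule borel_measurable_continuous_on[where f=adj]) (auto simp: adj_def intro!: continuous_intros)

lemma bounded_linear_entry: "bounded_linear (\<lambda>X::complex^'d^'d. X$i$j)"
  by (rule bounded_linear_compose[OF bounded_linear_vec_nth bounded_linear_vec_nth])

lemma bounded_linear_mtrace: "bounded_linear (mtrace :: complex^'d^'d \<Rightarrow> complex)"
  unfolding mtrace_def by (intro bounded_linear_sum bounded_linear_entry)

lemma matrix_add_rdistrib: "((A::complex^'d^'d) + B) ** C = A ** C + B ** C"
  by (simp add: vec_eq_iff matrix_matrix_mult_def distrib_right sum.distrib)

lemma bounded_linear_conj: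
  "bounded_linear (\<lambda>X::complex^'d^'d. (A::complex^'d^'d) ** X ** (B::complex^'d^'d))"
  unfolding linear_conv_bounded_linear[symmetric]
  by (rule linearI) (simp_all add: matrix_add_ldistrib matrix_add_rdistrib matrix_scalar_ac scalar_matrix_assoc)

lemma integral_entry:
  "integrable M f \<Longrightarrow> (integral\<^sup>L M f) $ i $ j = integral\<^sup>L M (\<lambda>x. (f x :: complex^'d^'d) $ i $ j)"
  using integral_bounded_linear[OF bounded_linear_entry, of M f i j] by simp


lemma sum_pm: "(\<Sum>i\<in>(UNIV::pm set). f i) = f Pl + f Mi"
  by (simp add: UNIV_pm)

lemma card_pm: "CARD(pm) = 2"
  by (simp add: UNIV_pm)

lemma norm_sq_pm:
  "(norm (X::complex^pm^pm))^2 =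
     (cmod (X$Pl$Pl))^2 + (cmod (X$Pl$Mi))^2 + (cmod (X$Mi$Pl))^2 + (cmod (X$Mi$Mi))^2"
  by (simp add: norm_sq_entries sum_pm)


section \<open>The one-dimensional torus\<close>

abbreviation torus1 :: "(real^1) set" where "torus1 \<equiv> torus"

lemma torus1_eq: "torus1 = {p. 0 \<le> p$1 \<and> p$1 < 2*pi}"
  by (simp add: torus_def forall_1)

lemma torus1_sets: "torus1 \<in> sets lborel"
proof -
  have "{p::real^1. 0 \<le> p$1} \<in> sets borel"
    by (intro borel_closed closed_Collect_le continuous_intros)
  moreover have "{p::real^1. p$1 < 2*pi} \<in> sets borel"
    by (intro borel_open open_Collect_less continuous_intros)
  ultimately show ?thesis by (simp add: torus1_eq Collect_conj_eq sets.Int)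
qed

lemma emeasure_torus1: "emeasure lborel torus1 = ennreal (2*pi)"
proof (rule antisym)
  have "torus1 \<subseteq> cbox (vec 0) (vec (2*pi))"
    by (auto simp: torus1_eq mem_box_cart)
  then have "emeasure lborel torus1 \<le> emeasure lborel (cbox (vec 0) (vec (2*pi)) :: (real^1) set)"
    by (intro emeasure_mono) auto
  then show "emeasure lborel torus1 \<le> ennreal (2*pi)"
    by (simp add: emeasure_lborel_cbox_eq Basis_vec_def inner_axis)
  have "box (vec 0) (vec (2*pi)) \<subseteq> torus1"
    by (auto simp: torus1_eq mem_box_cart)
  then have "emeasure lborel (box (vec 0) (vec (2*pi)) :: (real^1) set) \<le> emeasure lborel torus1"
    by (intro emeasure_mono torus1_sets)
  then show "ennreal (2*pi) \<le> emeasure lborel torus1"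
    by (simp add: emeasure_lborel_box_eq Basis_vec_def inner_axis)
qed

definition torus_measure :: "(real^1) measure" where
  "torus_measure = restrict_space lborel torus1"

lemma torus1_sets': "torus1 \<inter> space lborel \<in> sets lborel"
  using torus1_sets by simp

lemma space_torus_measure [simp]: "space torus_measure = torus1"
  by (simp add: torus_measure_def space_restrict_space)

lemma emeasure_torus_measure: "emeasure torus_measure torus1 = ennreal (2*pi)"
proof -
  have "emeasure torus_measure torus1 = emeasure lborel torus1"
    unfolding torus_measure_def by (rule emeasure_restrict_space[OF torus1_sets']) simp
  then show ?thesis by (simp add: emeasure_torus1)
qed

lemma measure_torus_measure: "measure torus_measure torus1 = 2*pi"
  by (simp add: measure_def emeasure_torus_measure)

interpretation torus: finite_measure torus_measure
  by (rule finite_measureI) (simp add: emeasure_torus_measure)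

lemma integral_torus_measure:
  "integral\<^sup>L torus_measure (f :: real^1 \<Rightarrow> 'b::{banach, second_countable_topology}) = (LINT p:torus1|lborel. f p)"
  by (simp add: torus_measure_def integral_restrict_space[OF torus1_sets'] set_lebesgue_integral_def)

lemma integrable_torus_measure:
  "integrable torus_measure (f :: real^1 \<Rightarrow> 'b::{banach, second_countable_topology}) \<longleftrightarrow> set_integrable lborel torus1 f"
  by (simp add: torus_measure_def integrable_restrict_space[OF torus1_sets'] set_integrable_def)

lemma measurable_torus_measure:
  "(f :: real^1 \<Rightarrow> 'b::{banach, second_countable_topology}) \<in> borel_measurable torus_measure \<longleftrightarrow> set_borel_measurable lborel torus1 f"
  by (simp add: torus_measure_def borel_measurable_restrict_space_iff[OF torus1_sets'] set_borel_measurable_def)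

lemma continuous_measurable_torus: "continuous_on UNIV f \<Longrightarrow> f \<in> borel_measurable torus_measure"
  unfolding torus_measure_def
  by (intro measurable_restrict_space1) (simp add: borel_measurable_continuous_onI)

lemma integral_character:
  fixes k :: int
  assumes "k \<noteq> 0"
  shows "integral\<^sup>L torus_measure (\<lambda>p::real^1. exp (\<i> * complex_of_real (of_int k * p$1))) = 0"
proof -
  let ?f = "\<lambda>p::real^1. exp (\<i> * complex_of_real (of_int k * p$1))"
  have "integrable torus_measure ?f"
    by (rule torus.integrable_const_bound[where B=1])
       (simp_all add: norm_exp_i_times continuous_measurable_torus continuous_intros)
  then have "integral\<^sup>L torus_measure ?f = integral torus1 ?f"
    using set_borel_integral_eq_integral(2) by (simp add: integral_torus_measure integrable_torus_measure)
  also have "\<dots> = integral ((\<lambda>x. x $ 1) ` torus1) (?f \<circ> vec)"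
    by (rule integral_vec1_eq)
  also have "(\<lambda>x::real^1. x $ 1) ` torus1 = {0..<2*pi}"
    by (force simp: torus1_eq image_iff intro: exI[where x="vec _"])
  also have "integral {0..<2*pi} (?f \<circ> vec) = integral {0..2*pi} (?f \<circ> vec)"
    by (rule integral_spike_set) (auto intro: negligible_subset[of "{2*pi}"])
  also have "\<dots> = 0"
  proof -
    let ?G = "\<lambda>z::complex. exp (\<i> * of_int k * z) / (\<i> * of_int k)"
    let ?F = "\<lambda>x::real. ?G (of_real x)"
    have "((?f \<circ> vec) has_integral (?F (2*pi) - ?F 0)) {0..2*pi}"
    proof (rule fundamental_theorem_of_calculus)
      fix x :: real
      have "(?G has_field_derivative exp (\<i> * of_int k * of_real x)) (at (of_real x))"
        using assms by (auto intro!: derivative_eq_intros simp: field_simps)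
      then show "(?F has_vector_derivative (?f \<circ> vec) x) (at x within {0..2*pi})"
        by (auto dest: has_vector_derivative_real_field simp: mult.assoc)
    qed simp
    moreover have "exp (\<i> * of_int k * of_real (2*pi)) = 1"
      by (simp add: exp_eq_1)
    ultimately show ?thesis by (simp add: integral_unique)
  qed
  finally show ?thesis .
qed


section \<open>Energy of square-integrable matrix functions\<close>

type_synonym mfun = "real^1 \<Rightarrow> complex^pm^pm"

definition sq_integrable :: "mfun \<Rightarrow> bool" where
  "sq_integrable A \<longleftrightarrow> A \<in> borel_measurable torus_measure \<and> integrable torus_measure (\<lambda>p. (norm (A p))^2)"

text \<open>The energy is the unnormalised squared norm: tnorm A = sqrt (energy A / (4 pi)).\<close>
definition energy :: "mfun \<Rightarrow> real" where
  "energy A = integral\<^sup>L torus_measure (\<lambda>p. (norm (A p))^2)"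

lemma le_one_plus_sq: "(x::real) \<le> 1 + x^2"
proof -
  have "0 \<le> (x - 1/2)^2" by simp
  then show ?thesis by (simp add: power2_eq_square algebra_simps)
qed

text \<open>Square-integrable functions are integrable since the torus has finite measure.\<close>
lemma sq_integrable_integrable:
  assumes "sq_integrable A" shows "integrable torus_measure A"
proof (rule Bochner_Integration.integrable_bound)
  show "integrable torus_measure (\<lambda>p. 1 + (norm (A p))^2)"
    using assms by (simp add: sq_integrable_def)
  show "AE p in torus_measure. norm (A p) \<le> norm (1 + (norm (A p))^2)"
    using le_one_plus_sq by (simp add: add_nonneg_nonneg)
qed (use assms in \<open>simp add: sq_integrable_def\<close>)

lemma energy_nonneg: "energy A \<ge> 0"
  unfolding energy_def by (rule integral_nonneg_AE) simp

lemma Tspace_sq_integrable: "A \<in> (Tspace :: mfun set) \<Longrightarrow> sq_integrable A"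
  by (simp add: Tspace_def sq_integrable_def measurable_torus_measure integrable_torus_measure)

lemma A0_eq_integral: "A0 (A::mfun) = (1/(2*pi)) *\<^sub>R integral\<^sup>L torus_measure A"
  by (simp add: A0_def integral_torus_measure)

lemma A0_entry:
  assumes "integrable torus_measure A"
  shows "A0 (A::mfun) $ i $ j = integral\<^sup>L torus_measure (\<lambda>p. A p $ i $ j) / (2*pi)"
proof -
  have "A0 A $ i $ j = (1/(2*pi)) *\<^sub>R integral\<^sup>L torus_measure (\<lambda>p. A p $ i $ j)"
    by (simp add: A0_eq_integral integral_entry[OF assms])
  then show ?thesis by (simp add: scaleR_conv_of_real)
qed

lemma tnorm_eq_energy: "tnorm (A::mfun) = sqrt (energy A / (4*pi))"
proof -
  have "tinner A A = (1/(2*pi)) * integral\<^sup>L torus_measure (\<lambda>p. (1/2) * complex_of_real ((norm (A p))^2))"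
    unfolding tinner_def integral_torus_measure[symmetric]
    by (simp add: card_pm mtrace_adj_self del: of_real_power)
  also have "\<dots> = complex_of_real (energy A / (4*pi))"
    by (simp add: energy_def del: of_real_power)
  finally show ?thesis by (simp add: tnorm_def)
qed

lemma perp_one_mean_traceless:
  assumes "sq_integrable A" "tinner one_T A = 0"
  shows "mtrace (A0 (A::mfun)) = 0"
proof -
  have "tinner one_T A = (1/(2*pi)) * integral\<^sup>L torus_measure (\<lambda>p. (1/2) * mtrace (A p))"
    unfolding tinner_def integral_torus_measure[symmetric] by (simp add: card_pm one_T_def)
  also have "integral\<^sup>L torus_measure (\<lambda>p. (1/2) * mtrace (A p)) = (1/2) * mtrace (integral\<^sup>L torus_measure A)"
    using integral_bounded_linear[OF bounded_linear_mtrace sq_integrable_integrable[OF assms(1)]] by simp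
  finally show ?thesis using assms(2) by (simp add: A0_eq_integral mtrace_scaleR)
qed

lemma norm_add_sq: "(norm (x + y :: 'a::real_inner))^2 = (norm x)^2 + 2 * (x \<bullet> y) + (norm y)^2"
  by (simp add: power2_norm_eq_inner inner_add inner_commute)

text \<open>Pythagoras: a constant is orthogonal to a mean-zero function.\<close>
lemma energy_const_plus:
  assumes Y: "sq_integrable Y" and mean: "integral\<^sup>L torus_measure Y = 0"
  shows "sq_integrable (\<lambda>p. K + Y p)" "energy (\<lambda>p. K + Y p) = 2*pi*(norm K)^2 + energy Y"
proof -
  have iY: "integrable torus_measure Y" by (rule sq_integrable_integrable[OF Y])
  have i2: "integrable torus_measure (\<lambda>p. (norm (Y p))^2)" using Y by (simp add: sq_integrable_def)
  have eq: "(\<lambda>p. (norm (K + Y p))^2) = (\<lambda>p. (norm K)^2 + (2 * (K \<bullet> Y p) + (norm (Y p))^2))"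
    by (simp add: norm_add_sq add.assoc)
  have iin: "integrable torus_measure (\<lambda>p. 2 * (K \<bullet> Y p))" using iY by simp
  show "sq_integrable (\<lambda>p. K + Y p)"
    unfolding sq_integrable_def eq using Y iin i2 by (auto simp: sq_integrable_def)
  have "energy (\<lambda>p. K + Y p) = integral\<^sup>L torus_measure (\<lambda>p. (norm K)^2)
          + (integral\<^sup>L torus_measure (\<lambda>p. 2 * (K \<bullet> Y p)) + energy Y)"
    unfolding energy_def eq using iin i2 by (simp add: integral_add)
  also have "integral\<^sup>L torus_measure (\<lambda>p. 2 * (K \<bullet> Y p)) = 0" using iY mean by simp
  also have "integral\<^sup>L torus_measure (\<lambda>p. (norm K)^2) = 2*pi*(norm K)^2"
    by (simp add: measure_torus_measure)
  finally show "energy (\<lambda>p. K + Y p) = 2*pi*(norm K)^2 + energy Y" by simp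
qed

lemma mean_fluctuation:
  assumes A: "sq_integrable A"
  shows "sq_integrable (\<lambda>p. A p - A0 A)" "integral\<^sup>L torus_measure (\<lambda>p. A p - A0 A) = 0"
        "energy A = 2*pi*(norm (A0 A))^2 + energy (\<lambda>p. A p - A0 A)"
proof -
  let ?m = "A0 A"
  have iA: "integrable torus_measure A" by (rule sq_integrable_integrable[OF A])
  have eq: "(\<lambda>p. (norm (A p - ?m))^2) = (\<lambda>p. (norm (A p))^2 + (- 2 * (?m \<bullet> A p) + (norm ?m)^2))"
  proof
    show "(norm (A p - ?m))^2 = (norm (A p))^2 + (- 2 * (?m \<bullet> A p) + (norm ?m)^2)" for p
      using norm_add_sq[of "A p" "- ?m"] by (simp add: inner_commute)
  qed
  show fl: "sq_integrable (\<lambda>p. A p - ?m)"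
    unfolding sq_integrable_def eq using A iA by (auto simp: sq_integrable_def)
  show mean: "integral\<^sup>L torus_measure (\<lambda>p. A p - ?m) = 0"
    using iA by (simp add: measure_torus_measure A0_eq_integral)
  show "energy A = 2*pi*(norm ?m)^2 + energy (\<lambda>p. A p - ?m)"
    using energy_const_plus(2)[OF fl mean, of ?m] by simp
qed

lemma mean_energy_le: "sq_integrable A \<Longrightarrow> 2*pi*(norm (A0 A))^2 \<le> energy A"
  using mean_fluctuation(3)[of A] energy_nonneg[of "\<lambda>p. A p - A0 A"] by linarith


section \<open>The shift for v_+ = 1, v_- = -1\<close>

definition shift_sign :: "pm \<Rightarrow> real" where
  "shift_sign i = (if i = Pl then 1 else -1)"

definition phase :: "pm \<Rightarrow> real^1 \<Rightarrow> complex" where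
  "phase i p = exp (\<i> * of_real (shift_sign i * p$1))"

lemma Sop_nth: "Sop vpm p $ i $ j = (if i = j then phase i p else 0)"
  by (simp add: Sop_def sum_1 vpm_def phase_def shift_sign_def)

lemma phase_unimodular: "cnj (phase i p) * phase i p = 1"
  using complex_norm_square[of "phase i p", symmetric] by (simp add: phase_def mult.commute)

lemma Sop_unitary: "Sop vpm p ** adj (Sop vpm p) = mat 1"
  using phase_unimodular
  by (simp add: vec_eq_iff matrix_matrix_mult_def sum_pm adj_def Sop_nth mat_def mult.commute)
     (metis pm.exhaust)

lemma conj_Sop_nth:
  "(adj (Sop vpm p) ** X ** Sop vpm p) $ i $ j = cnj (phase i p) * X$i$j * phase j p"
  by (cases i; cases j) (simp_all add: matrix_matrix_mult_def sum_pm adj_def Sop_nth)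

lemma measurable_Sop [measurable]: "Sop vpm \<in> borel_measurable torus_measure"
proof (rule continuous_measurable_torus)
  show "continuous_on UNIV (Sop vpm :: real^1 \<Rightarrow> complex^pm^pm)"
    unfolding Sop_def
  proof (intro continuous_on_vec_lambda)
    fix i j :: pm
    show "continuous_on UNIV (\<lambda>x::real^1. if i = j then exp (\<i> * complex_of_real
            (\<Sum>k\<in>UNIV. real_of_int (vpm i $ k) * x $ k)) else 0)"
      by (cases "i = j") (simp_all add: continuous_intros)
  qed
qed

lemma phase_product: "cnj (phase i p) * phase j p = exp (\<i> * complex_of_real ((shift_sign j - shift_sign i) * p$1))"
  by (simp add: phase_def exp_cnj exp_add[symmetric] algebra_simps)

lemma integrable_phase_product: "integrable torus_measure (\<lambda>p. cnj (phase i p) * phase j p)"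
  by (rule torus.integrable_const_bound[where B=1])
     (simp_all add: phase_def norm_mult phase_product continuous_measurable_torus continuous_intros)

lemma integral_phase_product:
  "integral\<^sup>L torus_measure (\<lambda>p. cnj (phase i p) * phase j p) = (if i = j then 2*pi else 0)"
proof (cases "i = j")
  case True
  then show ?thesis using phase_unimodular by (simp add: measure_torus_measure scaleR_conv_of_real)
next
  case False
  obtain k :: int where k: "k \<noteq> 0" "shift_sign j - shift_sign i = of_int k"
    using False by (cases i; cases j) (auto simp: shift_sign_def intro: that[of 2] that[of "-2"])
  have "(\<lambda>p. cnj (phase i p) * phase j p) = (\<lambda>p. exp (\<i> * complex_of_real (of_int k * p$1)))"
    by (simp add: phase_product k)
  then show ?thesis using integral_character[OF k(1)] False by simp
qed


section \<open>Two steps of the walk for a coin with damped mean\<close>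

text \<open>The scalar bookkeeping of the two-step estimate: with a the mean energy and b the
  fluctuation energy of A, g the energy and x the mean energy of W A, and y the energy
  of W (W A), the one-step bounds combine to a contraction by (1 - t) mu + t.\<close>
lemma two_step_arith:
  fixes t \<mu> a b g x y :: real
  assumes t: "0 \<le> t" "t \<le> 1" and "0 \<le> \<mu>" "0 \<le> b"
    and y: "y \<le> x + t * (g - x)" and g: "g \<le> a + t * b" and x: "x \<le> \<mu> * a + t * b"
  shows "y \<le> ((1 - t) * \<mu> + t) * (a + b)"
proof -
  have "y \<le> (1 - t) * x + t * g" using y by (simp add: algebra_simps)
  also have "\<dots> \<le> (1 - t) * (\<mu> * a + t * b) + t * (a + t * b)"
    using x g t by (intro add_mono mult_left_mono) auto
  also have "\<dots> = ((1 - t) * \<mu> + t) * a + t * b" by (simp add: algebra_simps)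
  also have "\<dots> \<le> ((1 - t) * \<mu> + t) * a + ((1 - t) * \<mu> + t) * b"
    using assms by (intro add_left_mono mult_right_mono) auto
  finally show ?thesis by (simp add: algebra_simps)
qed

locale coin_bounds =
  fixes nu :: "(complex^pm^pm) measure" and \<rho> \<mu> :: real
  assumes mean_coin: "Utilde nu ** adj (Utilde nu) = \<rho> *\<^sub>R mat 1"
    and rho: "0 \<le> \<rho>" "\<rho> < 1"
    and channel_contractive: "\<And>X. norm (Tch nu X) \<le> norm X"
    and channel_diag: "\<And>X. mtrace X = 0 \<Longrightarrow>
          (cmod (Tch nu X $Pl$Pl))^2 + (cmod (Tch nu X $Mi$Mi))^2 \<le> \<mu> * (norm X)^2"
    and mu: "0 \<le> \<mu>" "\<mu> < 1"
begin

abbreviation W :: "mfun \<Rightarrow> mfun" where "W \<equiv> walkW nu vpm"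

definition fluct :: "mfun \<Rightarrow> mfun" where
  "fluct A p = adj (Sop vpm p) ** (adj (Utilde nu) ** (A p - A0 A) ** Utilde nu) ** Sop vpm p"

lemma walk_split: "W A p = adj (Sop vpm p) ** Tch nu (A0 A) ** Sop vpm p + fluct A p"
  by (simp add: walkW_def fluct_def matrix_add_ldistrib matrix_add_rdistrib)

lemma conj_mean_coin:
  assumes D: "sq_integrable D" "integral\<^sup>L torus_measure D = 0"
  shows "sq_integrable (\<lambda>p. adj (Utilde nu) ** D p ** Utilde nu)"
    "integral\<^sup>L torus_measure (\<lambda>p. adj (Utilde nu) ** D p ** Utilde nu) = 0"
    "energy (\<lambda>p. adj (Utilde nu) ** D p ** Utilde nu) = \<rho>^2 * energy D"
proof -
  let ?U = "Utilde nu"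
  have n: "(norm (adj ?U ** D p ** ?U))^2 = \<rho>^2 * (norm (D p))^2" for p
    by (rule norm_conj_scaled[OF mean_coin])
  show "sq_integrable (\<lambda>p. adj ?U ** D p ** ?U)"
    using D(1) unfolding sq_integrable_def n
    by (simp add: borel_measurable_matrix_mult)
  show "energy (\<lambda>p. adj ?U ** D p ** ?U) = \<rho>^2 * energy D"
    unfolding energy_def n by simp
  show "integral\<^sup>L torus_measure (\<lambda>p. adj ?U ** D p ** ?U) = 0"
    using integral_bounded_linear[OF bounded_linear_conj sq_integrable_integrable[OF D(1)], of "adj ?U" ?U] D(2)
    by simp
qed

lemma conj_shift:
  assumes Y: "sq_integrable Y"
  shows "sq_integrable (\<lambda>p. adj (Sop vpm p) ** Y p ** Sop vpm p)"
    "energy (\<lambda>p. adj (Sop vpm p) ** Y p ** Sop vpm p) = energy Y"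
proof -
  have n: "norm (adj (Sop vpm p) ** Y p ** Sop vpm p) = norm (Y p)" for p
    by (rule norm_conj_unitary[OF Sop_unitary])
  show "sq_integrable (\<lambda>p. adj (Sop vpm p) ** Y p ** Sop vpm p)"
    using Y unfolding sq_integrable_def n
    by (simp add: borel_measurable_matrix_mult borel_measurable_adj)
  show "energy (\<lambda>p. adj (Sop vpm p) ** Y p ** Sop vpm p) = energy Y"
    unfolding energy_def n ..
qed

lemma walk_energy:
  assumes A: "sq_integrable A"
  shows "sq_integrable (W A)"
    "energy (W A) = 2*pi*(norm (Tch nu (A0 A)))^2 + \<rho>^2 * energy (\<lambda>p. A p - A0 A)"
proof -
  let ?K = "Tch nu (A0 A)" and ?Y = "\<lambda>p. adj (Utilde nu) ** (A p - A0 A) ** Utilde nu"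
  note D = mean_fluctuation[OF A]
  note Y = conj_mean_coin[OF D(1) D(2)]
  note KY = energy_const_plus[OF Y(1) Y(2), of ?K]
  have WA: "W A = (\<lambda>p. adj (Sop vpm p) ** (?K + ?Y p) ** Sop vpm p)"
    by (simp add: walkW_def)
  show "sq_integrable (W A)"
    unfolding WA by (rule conj_shift(1)[OF KY(1)])
  show "energy (W A) = 2*pi*(norm ?K)^2 + \<rho>^2 * energy (\<lambda>p. A p - A0 A)"
    unfolding WA conj_shift(2)[OF KY(1)] KY(2) Y(3) ..
qed

text \<open>The fluctuating part has damped energy and, since the shift only multiplies the
  diagonal by phases of modulus one, a mean with vanishing diagonal.\<close>
lemma fluct_facts:
  assumes A: "sq_integrable A"
  shows "sq_integrable (fluct A)" "energy (fluct A) = \<rho>^2 * energy (\<lambda>p. A p - A0 A)"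
    "A0 (fluct A) $ i $ i = 0"
proof -
  let ?Y = "\<lambda>p. adj (Utilde nu) ** (A p - A0 A) ** Utilde nu"
  note D = mean_fluctuation[OF A]
  note Y = conj_mean_coin[OF D(1) D(2)]
  have F: "fluct A = (\<lambda>p. adj (Sop vpm p) ** ?Y p ** Sop vpm p)"
    by (simp add: fun_eq_iff fluct_def)
  show Fsq: "sq_integrable (fluct A)"
    unfolding F by (rule conj_shift(1)[OF Y(1)])
  show "energy (fluct A) = \<rho>^2 * energy (\<lambda>p. A p - A0 A)"
    unfolding F conj_shift(2)[OF Y(1)] Y(3) ..
  have diag: "fluct A p $ i $ i = ?Y p $ i $ i" for p
    using phase_unimodular[of i p] by (simp add: F conj_Sop_nth algebra_simps)
  have "integral\<^sup>L torus_measure (\<lambda>p. fluct A p $ i $ i) = (integral\<^sup>L torus_measure ?Y) $ i $ i"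
    unfolding diag by (rule integral_entry[OF sq_integrable_integrable[OF Y(1)], symmetric])
  then show "A0 (fluct A) $ i $ i = 0"
    using Y(2) by (simp add: A0_entry[OF sq_integrable_integrable[OF Fsq]])
qed

text \<open>Entries of the mean after one step: the momentum average of the phases keeps the
  diagonal of T(A0) and only the fluctuation contributes off the diagonal.\<close>
lemma walk_mean_entry:
  assumes A: "sq_integrable A"
  shows "A0 (W A) $ i $ j = (if i = j then Tch nu (A0 A) $ i $ i else A0 (fluct A) $ i $ j)"
proof -
  let ?K = "Tch nu (A0 A)"
  have iF: "integrable torus_measure (fluct A)"
    by (rule sq_integrable_integrable[OF fluct_facts(1)[OF A]])
  have iW: "integrable torus_measure (W A)"
    by (rule sq_integrable_integrable[OF walk_energy(1)[OF A]])
  have ent: "W A p $ i $ j = ?K$i$j * (cnj (phase i p) * phase j p) + fluct A p $ i $ j" for p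
    by (simp add: walk_split conj_Sop_nth algebra_simps)
  have "integral\<^sup>L torus_measure (\<lambda>p. W A p $ i $ j)
          = ?K$i$j * integral\<^sup>L torus_measure (\<lambda>p. cnj (phase i p) * phase j p)
            + integral\<^sup>L torus_measure (\<lambda>p. fluct A p $ i $ j)"
    unfolding ent using integrable_phase_product[of i j]
      integrable_bounded_linear[OF bounded_linear_entry iF, of i j]
    by simp
  then have "A0 (W A) $ i $ j = (if i = j then ?K$i$j else 0) + A0 (fluct A) $ i $ j"
    by (simp add: A0_entry[OF iW] A0_entry[OF iF] integral_phase_product add_divide_distrib)
  then show ?thesis using fluct_facts(3)[OF A] by auto
qed

lemma walk_mean_bound:
  assumes A: "sq_integrable A" and tr: "mtrace (A0 A) = 0"
  shows "2*pi*(norm (A0 (W A)))^2 \<le> 2*pi*\<mu>*(norm (A0 A))^2 + \<rho>^2 * energy (\<lambda>p. A p - A0 A)"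
proof -
  let ?K = "Tch nu (A0 A)" and ?F = "A0 (fluct A)"
  have "(norm (A0 (W A)))^2
          = ((cmod (?K$Pl$Pl))^2 + (cmod (?K$Mi$Mi))^2) + ((cmod (?F$Pl$Mi))^2 + (cmod (?F$Mi$Pl))^2)"
    by (simp add: norm_sq_pm walk_mean_entry[OF A])
  also have "\<dots> \<le> \<mu> * (norm (A0 A))^2 + (norm ?F)^2"
    using channel_diag[OF tr] norm_sq_pm[of ?F]
      zero_le_power2[of "cmod (?F$Pl$Pl)"] zero_le_power2[of "cmod (?F$Mi$Mi)"]
    by linarith
  finally have "2*pi*(norm (A0 (W A)))^2 \<le> 2*pi*(\<mu> * (norm (A0 A))^2 + (norm ?F)^2)"
    by (intro mult_left_mono) auto
  moreover have "2*pi*(norm ?F)^2 \<le> \<rho>^2 * energy (\<lambda>p. A p - A0 A)"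
    using mean_energy_le[OF fluct_facts(1)[OF A]] fluct_facts(2)[OF A] by simp
  ultimately show ?thesis by (simp add: algebra_simps)
qed

lemma walk_two_step_energy:
  assumes A: "sq_integrable A" and tr: "mtrace (A0 A) = 0"
  shows "energy (W (W A)) \<le> ((1 - \<rho>^2) * \<mu> + \<rho>^2) * energy A"
proof -
  have G: "sq_integrable (W A)" by (rule walk_energy(1)[OF A])
  have T_le: "(norm (Tch nu X))^2 \<le> (norm X)^2" for X
    using channel_contractive[of X] by (simp add: power_mono)
  have t: "0 \<le> \<rho>^2" "\<rho>^2 \<le> 1" using rho by (simp_all add: power_le_one)
  have y: "energy (W (W A)) \<le> 2*pi*(norm (A0 (W A)))^2
          + \<rho>^2 * (energy (W A) - 2*pi*(norm (A0 (W A)))^2)"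
    using walk_energy(2)[OF G] mean_fluctuation(3)[OF G] T_le[of "A0 (W A)"] by simp
  have g: "energy (W A) \<le> 2*pi*(norm (A0 A))^2 + \<rho>^2 * energy (\<lambda>p. A p - A0 A)"
    using walk_energy(2)[OF A] T_le[of "A0 A"] by simp
  have x: "2*pi*(norm (A0 (W A)))^2 \<le> \<mu> * (2*pi*(norm (A0 A))^2) + \<rho>^2 * energy (\<lambda>p. A p - A0 A)"
    using walk_mean_bound[OF A tr] by (simp add: algebra_simps)
  have "energy (W (W A)) \<le> ((1 - \<rho>^2) * \<mu> + \<rho>^2)
                      * (2*pi*(norm (A0 A))^2 + energy (\<lambda>p. A p - A0 A))"
    by (rule two_step_arith[OF t mu(1) energy_nonneg y g x])
  then show ?thesis by (simp add: mean_fluctuation(3)[OF A, symmetric])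
qed

lemma walk_two_step_contractive:
  "\<exists>c<1. \<forall>A \<in> (Tspace :: mfun set). tinner one_T A = 0 \<longrightarrow> tnorm (W (W A)) \<le> c * tnorm A"
proof (intro exI conjI ballI impI)
  let ?\<kappa> = "(1 - \<rho>^2) * \<mu> + \<rho>^2"
  have "\<rho>^2 < 1" using rho by (simp add: power_less_one_iff)
  then have "(1 - \<rho>^2) * \<mu> < (1 - \<rho>^2) * 1" using mu by (intro mult_strict_left_mono) auto
  then show "sqrt ?\<kappa> < 1" by simp
  fix A :: mfun assume "A \<in> Tspace" and perp: "tinner one_T A = 0"
  have A: "sq_integrable A" by (rule Tspace_sq_integrable) fact
  have "energy (W (W A)) / (4*pi) \<le> ?\<kappa> * (energy A / (4*pi))"
    using walk_two_step_energy[OF A perp_one_mean_traceless[OF A perp]] by (simp add: divide_right_mono)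
  then have "sqrt (energy (W (W A)) / (4*pi)) \<le> sqrt ?\<kappa> * sqrt (energy A / (4*pi))"
    by (metis real_sqrt_le_mono real_sqrt_mult)
  then show "tnorm (W (W A)) \<le> sqrt ?\<kappa> * tnorm A" by (simp add: tnorm_eq_energy)
qed

end


text \<open>A nonempty open interval has positive Lebesgue measure, so a continuous function
  vanishing almost everywhere on it vanishes everywhere on it.\<close>
lemma continuous_AE_zero_on_interval:
  fixes g :: "real \<Rightarrow> real"
  assumes g: "continuous_on UNIV g" and AE: "AE y in lborel. y \<in> {a<..<b} \<longrightarrow> g y = 0"
    and x: "x \<in> {a<..<b}"
  shows "g x = 0"
proof -
  have "closed {y. g y = 0}"
    using g by (intro closed_Collect_eq continuous_on_const) auto
  moreover have "AE y \<in> {a<..<b} in lebesgue. y \<in> {y. g y = 0}"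
    using AE_completion[OF AE] by simp
  ultimately show ?thesis
    using mem_closed_if_AE_lebesgue_open[OF open_greaterThanLessThan _ _ x] by blast
qed

lemma cauchy_schwarz2: "(u * g + v * d)^2 \<le> (g^2 + d^2) * (u^2 + v^2)" for u v g d :: real
proof -
  have "0 \<le> (u * d - v * g)^2" by simp
  then show ?thesis by (simp add: power2_eq_square algebra_simps)
qed

text \<open>The diagonal of a conjugated traceless matrix mixes its diagonal entry a and the
  symmetrised off-diagonal entry (b + e)/2 with weights c, s; this bounds the result.\<close>
lemma diag_mix_bound:
  fixes a b e :: complex and c s :: real
  shows "2 * (cmod (a * of_real c + ((b + e) / 2) * of_real s))^2
           \<le> (c^2 + s^2) * (2 * (cmod a)^2 + (cmod b)^2 + (cmod e)^2)"
proof -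
  let ?h = "(b + e) / 2"
  have "cmod (a * of_real c + ?h * of_real s) \<le> cmod a * \<bar>c\<bar> + cmod ?h * \<bar>s\<bar>"
    by (rule order_trans[OF norm_triangle_ineq]) (simp add: norm_mult)
  then have "(cmod (a * of_real c + ?h * of_real s))^2 \<le> (cmod a * \<bar>c\<bar> + cmod ?h * \<bar>s\<bar>)^2"
    by (simp add: power_mono)
  also have "\<dots> \<le> (c^2 + s^2) * ((cmod a)^2 + (cmod ?h)^2)"
    using cauchy_schwarz2[of "cmod a" "\<bar>c\<bar>" "cmod ?h" "\<bar>s\<bar>"] by simp
  finally have z: "(cmod (a * of_real c + ?h * of_real s))^2 \<le> (c^2 + s^2) * ((cmod a)^2 + (cmod ?h)^2)" .
  have "cmod ?h \<le> (cmod b + cmod e) / 2"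
    using norm_triangle_ineq[of b e] by (simp add: norm_divide)
  then have "(cmod ?h)^2 \<le> ((cmod b + cmod e) / 2)^2" by (simp add: power_mono)
  also have "\<dots> \<le> ((cmod b)^2 + (cmod e)^2) / 2"
    using cauchy_schwarz2[of "cmod b" 1 "cmod e" 1] by (simp add: power_divide)
  finally have h: "2 * ((cmod a)^2 + (cmod ?h)^2) \<le> 2 * (cmod a)^2 + (cmod b)^2 + (cmod e)^2"
    by simp
  have "2 * (cmod (a * of_real c + ?h * of_real s))^2 \<le> (c^2 + s^2) * (2 * ((cmod a)^2 + (cmod ?h)^2))"
    using z by (simp add: algebra_simps)
  also have "\<dots> \<le> (c^2 + s^2) * (2 * (cmod a)^2 + (cmod b)^2 + (cmod e)^2)"
    using h by (intro mult_left_mono) auto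
  finally show ?thesis .
qed

lemma trig_le_amplitude: "c * cos t + s * sin t \<le> sqrt (c^2 + s^2)"
  using cauchy_schwarz2[of "cos t" c "sin t" s] by (intro real_le_rsqrt) (simp add: mult.commute)

section \<open>The truncated Gaussian coin\<close>

locale gauss_coin =
  fixes r0 \<sigma> :: real
begin

abbreviation "f \<equiv> gauss_density r0 \<sigma>"
abbreviation "N \<equiv> gauss_N r0 \<sigma>"
abbreviation "nu \<equiv> nu_gauss r0 \<sigma>"
abbreviation "bump r \<equiv> exp (- (r - r0)\<^sup>2 / \<sigma>\<^sup>2)"

abbreviation "D \<equiv> density lborel (\<lambda>r. ennreal (f r))"

lemma continuous_bump: "continuous_on S (\<lambda>r. bump r)"
  unfolding divide_inverse by (intro continuous_intros)

lemma integrable_bump: "integrable lborel (\<lambda>r. indicator {r0-pi..r0+pi} r * bump r)"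
  using borel_integrable_compact[OF compact_Icc continuous_bump] by simp

lemma gauss_N_eq: "N = integral\<^sup>L lborel (\<lambda>r. indicator {r0-pi..r0+pi} r * bump r)"
proof -
  have "N = (LBINT r:{r0-pi..r0+pi}. bump r)"
    unfolding gauss_N_def by (rule interval_integral_Icc) simp
  then show ?thesis by (simp add: set_lebesgue_integral_def)
qed

text \<open>The normalising constant is positive (for every sigma), since the integrand is
  continuous and positive on an interval.\<close>
lemma gauss_N_pos: "0 < N"
proof -
  have nonneg: "0 \<le> indicator {r0-pi..r0+pi} r * bump r" for r
    by (simp add: indicator_def)
  have "N \<noteq> 0"
  proof
    assume "N = 0"
    then have "AE r in lborel. indicator {r0-pi..r0+pi} r * bump r = 0"
      using integral_nonneg_eq_0_iff_AE[OF integrable_bump] nonneg gauss_N_eq by simp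
    then have "AE r in lborel. r \<in> {r0-pi<..<r0+pi} \<longrightarrow> bump r = 0"
      by eventually_elim (auto simp: indicator_def)
    then have "bump r0 = 0"
      by (rule continuous_AE_zero_on_interval[OF continuous_bump]) simp
    then show False by simp
  qed
  moreover have "0 \<le> N"
    unfolding gauss_N_eq by (rule integral_nonneg_AE) (simp add: nonneg)
  ultimately show ?thesis by simp
qed

lemma density_nonneg: "0 \<le> f r"
  using gauss_N_pos by (simp add: gauss_density_def indicator_def)

lemma density_pos: "r \<in> {r0-pi..r0+pi} \<Longrightarrow> 0 < f r"
  using gauss_N_pos by (simp add: gauss_density_def)

lemma borel_measurable_density [measurable]: "f \<in> borel_measurable borel"
  unfolding gauss_density_def
  by (intro borel_measurable_divide borel_measurable_times borel_measurable_continuous_onI[OF continuous_bump])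
     auto

lemma emeasure_law: "emeasure D UNIV = 1"
proof -
  have "integrable lborel f"
    unfolding gauss_density_def using integrable_bump by (intro integrable_divide_zero) simp
  then have "emeasure D UNIV = ennreal (integral\<^sup>L lborel f)"
    by (simp add: emeasure_density[of _ lborel UNIV, simplified] nn_integral_eq_integral density_nonneg)
  also have "integral\<^sup>L lborel f = 1"
    unfolding gauss_density_def using gauss_N_eq gauss_N_pos by simp
  finally show ?thesis by simp
qed

lemma measure_law: "measure D UNIV = 1"
  by (simp add: measure_def emeasure_law)

sublocale law: finite_measure D
  by (rule finite_measureI) (simp add: emeasure_law)

lemma integrable_law:
  "continuous_on UNIV g \<Longrightarrow> (\<And>r. norm (g r) \<le> B) \<Longrightarrow> integrable D (g :: real \<Rightarrow> 'b::{banach,second_countable_topology})"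
  by (rule law.integrable_const_bound[where B=B]) (simp_all add: borel_measurable_continuous_onI)

lemma continuous_Ur: "continuous_on UNIV Ur"
  unfolding Ur_def
proof (intro continuous_on_vec_lambda)
  fix i j :: pm
  show "continuous_on UNIV (\<lambda>r. if i = Pl \<and> j = Pl then complex_of_real (cos r)
                 else if i = Mi \<and> j = Mi then complex_of_real (- cos r)
                 else complex_of_real (sin r))"
    by (cases i; cases j) (simp_all add: continuous_intros)
qed

lemma borel_measurable_Ur [measurable]: "Ur \<in> borel_measurable borel"
  by (rule borel_measurable_continuous_onI[OF continuous_Ur])

lemma Ur_nth: "Ur r $ Pl $ Pl = of_real (cos r)" "Ur r $ Pl $ Mi = of_real (sin r)"
   "Ur r $ Mi $ Pl = of_real (sin r)" "Ur r $ Mi $ Mi = - of_real (cos r)"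
  by (simp_all add: Ur_def)

lemma Ur_unitary: "Ur r ** adj (Ur r) = mat 1"
proof -
  have cs: "complex_of_real (cos r) * of_real (cos r) + of_real (sin r) * of_real (sin r) = 1"
    by (simp flip: of_real_mult of_real_add)
  have "(Ur r ** adj (Ur r)) $ i $ j = mat 1 $ i $ j" for i j
    using cs by (cases i; cases j) (simp_all add: matrix_matrix_mult_def sum_pm adj_def Ur_nth mat_def algebra_simps)
  then show ?thesis by (simp add: vec_eq_iff)
qed

lemma integral_nu:
  "g \<in> borel_measurable borel \<Longrightarrow>
     integral\<^sup>L nu (g :: _ \<Rightarrow> 'b::{banach,second_countable_topology}) = integral\<^sup>L D (\<lambda>r. g (Ur r))"
  unfolding nu_gauss_def
  by (rule integral_distr) (simp add: measurable_density_eq1)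

definition cos_moment :: "real \<Rightarrow> real" where "cos_moment k = integral\<^sup>L D (\<lambda>r. cos (k * r))"
definition sin_moment :: "real \<Rightarrow> real" where "sin_moment k = integral\<^sup>L D (\<lambda>r. sin (k * r))"

lemma integrable_cos: "integrable D (\<lambda>r. cos (k * r))"
  by (rule integrable_law[where B=1]) (simp_all add: continuous_intros)

lemma integrable_sin: "integrable D (\<lambda>r. sin (k * r))"
  by (rule integrable_law[where B=1]) (simp_all add: continuous_intros)

lemma Utilde_nth:
  "Utilde nu $ Pl $ Pl = of_real (cos_moment 1)" "Utilde nu $ Pl $ Mi = of_real (sin_moment 1)"
  "Utilde nu $ Mi $ Pl = of_real (sin_moment 1)" "Utilde nu $ Mi $ Mi = - of_real (cos_moment 1)"
proof -
  have "norm (Ur r) \<le> 2" for r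
  proof -
    have "(norm (Ur r))^2 \<le> 2^2" by (simp add: norm_sq_pm Ur_nth)
    then show ?thesis by (rule power2_le_imp_le) simp
  qed
  then have iU: "integrable D Ur" by (rule integrable_law[OF continuous_Ur])
  have "Utilde nu = integral\<^sup>L D Ur"
    unfolding Utilde_def by (subst integral_nu) simp_all
  then show "Utilde nu $ Pl $ Pl = of_real (cos_moment 1)" "Utilde nu $ Pl $ Mi = of_real (sin_moment 1)"
    "Utilde nu $ Mi $ Pl = of_real (sin_moment 1)" "Utilde nu $ Mi $ Mi = - of_real (cos_moment 1)"
    by (simp_all add: integral_entry[OF iU] Ur_nth cos_moment_def sin_moment_def)
qed

lemma mean_coin_gauss:
  "Utilde nu ** adj (Utilde nu) = ((cos_moment 1)^2 + (sin_moment 1)^2) *\<^sub>R mat 1"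
proof -
  have "(Utilde nu ** adj (Utilde nu)) $ i $ j
          = (if i = j then of_real ((cos_moment 1)^2 + (sin_moment 1)^2) else 0)" for i j
    by (cases i; cases j) (simp_all add: matrix_matrix_mult_def sum_pm adj_def Utilde_nth power2_eq_square)
  then show ?thesis unfolding vec_eq_iff scaleR_mat1_nth by blast
qed

lemma channel_eq: "Tch nu X = integral\<^sup>L D (\<lambda>r. adj (Ur r) ** X ** Ur r)"
  unfolding Tch_def by (rule integral_nu) measurable

lemma integrable_conj_Ur: "integrable D (\<lambda>r. adj (Ur r) ** X ** Ur r)"
  by (rule law.integrable_const_bound[where B="norm X"])
     (simp_all add: norm_conj_unitary[OF Ur_unitary] measurable_density_eq1)

lemma channel_contractive_gauss: "norm (Tch nu X) \<le> norm X"
proof -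
  have "norm (Tch nu X) \<le> integral\<^sup>L D (\<lambda>r. norm (adj (Ur r) ** X ** Ur r))"
    unfolding channel_eq by (rule integral_norm_bound)
  then show ?thesis by (simp add: norm_conj_unitary[OF Ur_unitary] measure_law)
qed

lemma conj_Ur_diag:
  assumes "X $ Mi $ Mi = - X $ Pl $ Pl"
  shows "(adj (Ur r) ** X ** Ur r) $ Pl $ Pl
           = X$Pl$Pl * of_real (cos (2*r)) + ((X$Pl$Mi + X$Mi$Pl) / 2) * of_real (sin (2*r))"
    "(adj (Ur r) ** X ** Ur r) $ Mi $ Mi
           = - (X$Pl$Pl * of_real (cos (2*r)) + ((X$Pl$Mi + X$Mi$Pl) / 2) * of_real (sin (2*r)))"
  using assms unfolding cos_double sin_double
  by (simp_all add: matrix_matrix_mult_def sum_pm adj_def Ur_nth power2_eq_square field_simps)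

lemma channel_diag_gauss:
  assumes tr: "mtrace X = 0"
  shows "(cmod (Tch nu X $Pl$Pl))^2 + (cmod (Tch nu X $Mi$Mi))^2
           \<le> ((cos_moment 2)^2 + (sin_moment 2)^2) * (norm X)^2"
proof -
  let ?a = "X $ Pl $ Pl" and ?h = "(X $ Pl $ Mi + X $ Mi $ Pl) / 2"
  have XM: "X $ Mi $ Mi = - ?a"
    using tr by (simp add: mtrace_def sum_pm eq_neg_iff_add_eq_0 add.commute)
  have i1: "integrable D (\<lambda>r. ?a * complex_of_real (cos (2 * r)))"
    using integrable_cos[of 2] by simp
  have i2: "integrable D (\<lambda>r. ?h * complex_of_real (sin (2 * r)))"
    using integrable_sin[of 2] by simp
  define z where "z = ?a * of_real (cos_moment 2) + ?h * of_real (sin_moment 2)"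
  have avg: "integral\<^sup>L D (\<lambda>r. ?a * of_real (cos (2 * r)) + ?h * of_real (sin (2 * r))) = z"
    unfolding z_def using i1 i2 by (simp add: integral_add cos_moment_def sin_moment_def)
  have "Tch nu X $ Pl $ Pl = z"
    unfolding channel_eq integral_entry[OF integrable_conj_Ur] conj_Ur_diag(1)[OF XM] avg ..
  moreover have "Tch nu X $ Mi $ Mi = - z"
    unfolding channel_eq integral_entry[OF integrable_conj_Ur] conj_Ur_diag(2)[OF XM] integral_minus avg ..
  ultimately have "(cmod (Tch nu X $Pl$Pl))^2 + (cmod (Tch nu X $Mi$Mi))^2 = 2 * (cmod z)^2"
    by simp
  also have "\<dots> \<le> ((cos_moment 2)^2 + (sin_moment 2)^2) * (norm X)^2"
    using diag_mix_bound[of ?a "cos_moment 2" "X $ Pl $ Mi" "X $ Mi $ Pl" "sin_moment 2"]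
    by (simp add: z_def norm_sq_pm XM add.assoc)
  finally show ?thesis .
qed

lemma integral_zero_vanishes:
  fixes g :: "real \<Rightarrow> real"
  assumes g: "continuous_on UNIV g" "\<And>r. 0 \<le> g r" "integrable D g" "integral\<^sup>L D g = 0"
    and r: "r \<in> {r0-pi<..<r0+pi}"
  shows "g r = 0"
proof -
  have "AE r in D. g r = 0"
    using integral_nonneg_eq_0_iff_AE[OF g(3)] g(2,4) by simp
  then have "AE r in lborel. 0 < f r \<longrightarrow> g r = 0"
    by (subst (asm) AE_density) simp_all
  then have "AE r in lborel. r \<in> {r0-pi<..<r0+pi} \<longrightarrow> g r = 0"
    by eventually_elim (auto intro: density_pos)
  then show ?thesis by (rule continuous_AE_zero_on_interval[OF g(1) _ r])
qed

text \<open>The Fourier moments of order k \<ge> 1 have modulus < 1: otherwise the nonnegative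
  function sqrt (c^2 + s^2) - (c cos (k r) + s sin (k r)) would have mean \<le> 0, hence vanish
  on the interval, which is impossible since its values at two points a half-period
  apart add up to 2 sqrt (c^2 + s^2).\<close>
lemma moment_strict:
  assumes k: "1 \<le> k"
  shows "(cos_moment k)^2 + (sin_moment k)^2 < 1"
proof (rule ccontr)
  let ?c = "cos_moment k" and ?s = "sin_moment k"
  define \<rho> where "\<rho> = sqrt (?c^2 + ?s^2)"
  assume "\<not> ?thesis"
  then have \<rho>1: "1 \<le> \<rho>" by (simp add: \<rho>_def)
  define g where "g r = \<rho> - (?c * cos (k * r) + ?s * sin (k * r))" for r
  have g_nonneg: "0 \<le> g r" for r
    using trig_le_amplitude[of ?c "k * r" ?s] by (simp add: g_def \<rho>_def)
  have g_cont: "continuous_on UNIV g"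
    unfolding g_def by (intro continuous_intros)
  have g_int: "integrable D g"
    unfolding g_def using integrable_cos[of k] integrable_sin[of k] by simp
  have "integral\<^sup>L D g = \<rho> - \<rho>^2"
    unfolding g_def using integrable_cos[of k] integrable_sin[of k]
    by (simp add: measure_law cos_moment_def sin_moment_def \<rho>_def power2_eq_square)
  moreover have "0 \<le> integral\<^sup>L D g"
    by (rule integral_nonneg_AE) (simp add: g_nonneg)
  ultimately have "integral\<^sup>L D g = 0"
    using \<rho>1 by (simp add: power2_eq_square)
  then have vanish: "g r = 0" if "r \<in> {r0-pi<..<r0+pi}" for r
    by (rule integral_zero_vanishes[OF g_cont g_nonneg g_int _ that])
  define x where "x = r0 - pi / (2 * k)"
  have half: "0 < pi / (2 * k)" "pi / (2 * k) < pi" using k by (simp_all add: field_simps)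
  have "k * (x + pi / k) = k * x + pi" using k by (simp add: field_simps)
  then have "g x + g (x + pi / k) = 2 * \<rho>" by (simp add: g_def)
  moreover have "x + pi / k = r0 + pi / (2 * k)" using k by (simp add: x_def field_simps)
  then have "x \<in> {r0-pi<..<r0+pi}" "x + pi / k \<in> {r0-pi<..<r0+pi}"
    using half pi_gt_zero by (auto simp: x_def)
  ultimately show False using vanish \<rho>1 by simp
qed

end


text \<open>The Gaussian coin satisfies the hypotheses of coin_bounds with rho and mu the
  squared first and second Fourier moments; the argument does not use sigma > 0.\<close>
theorem lemma3:
  fixes r0 \<sigma> :: real
  assumes "\<sigma> > 0"
  shows "strictly_contractive_perp
           (\<lambda>A :: real^1 \<Rightarrow> complex^pm^pm.
              walkW (nu_gauss r0 \<sigma>) vpm (walkW (nu_gauss r0 \<sigma>) vpm A))"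
proof -
  interpret g: gauss_coin r0 \<sigma> .
  interpret coin_bounds "nu_gauss r0 \<sigma>" "(g.cos_moment 1)^2 + (g.sin_moment 1)^2"
      "(g.cos_moment 2)^2 + (g.sin_moment 2)^2"
    by unfold_locales
       (simp_all add: g.mean_coin_gauss g.moment_strict g.channel_contractive_gauss g.channel_diag_gauss)
  show ?thesis
    unfolding strictly_contractive_perp_def by (rule walk_two_step_contractive)
qed

end
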